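(* Let $c\in\mathbb{C}(t)\setminus\{0,1,t\}$ and $F_n$, $P_1$ as in the context. Write $F_n(1,t)=(A_n+O(t),\;t(B_n+O(t)))$ as polynomials in $t$, i.e. $A_n$ is the constant term of the first coordinate of $F_n(1,t)$ and $B_n$ is the coefficient of $t$ in the second coordinate (whose constant term vanishes). Then $A_n=P_1(1,0)^{4^{n-1}}$ for all $n\ge1$, and $\limsup_{n\to\infty}|B_n|^{1/4^{n-1}}\le|P_1(1,0)|$.
   Context: $F_{t_1,t_2}(z,w)=\big((t_1w^2-t_2z^2)^2,\;4t_2zw(w-z)(t_1w-t_2z)\big)$. $C=(c_1,c_2)$ is a pair of coprime homogeneous polynomials in $(t_1,t_2)$ of equal degree with $c(t)=c_1(t,1)/c_2(t,1)$. $F_1=F_{t_1,t_2}(C)/\gcd(F_{t_1,t_2}(C))=(P_1,Q_1)$ (dividing by the gcd of the two coordinates), and $F_{n+1}=F_{t_1,t_2}(F_n)/t_2^2$ (substituting the coordinates of $F_n$ for $(z,w)$); these are pairs of homogeneous polynomials in $(t_1,t_2)$, and $Q_1(1,0)=0$. *)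

theory Defs
  imports "HOL-Computational_Algebra.Computational_Algebra" "HOL-Computational_Algebra.Field_as_Ring"
          "HOL-Library.Extended_Real" "HOL-Library.Liminf_Limsup"
begin

text \<open>Polynomials in two variables (t1,t2) are represented as complex poly poly:
 the inner variable is t1, the outer variable is t2.\<close>

type_synonym bpoly = "complex poly poly"

definition T1 :: bpoly where "T1 = [:[:0, 1:]:]"
definition T2 :: bpoly where "T2 = [:0, 1:]"

definition ev2 :: "bpoly \<Rightarrow> complex \<Rightarrow> complex \<Rightarrow> complex" where
  "ev2 P a b = poly (poly P [:b:]) a"

definition homogeneous :: "bpoly \<Rightarrow> nat \<Rightarrow> bool" where
  "homogeneous P d \<longleftrightarrow> (\<forall>i j. coeff (coeff P j) i \<noteq> 0 \<longrightarrow> i + j = d)"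

text \<open>P(t,1) as a univariate polynomial in t.\<close>
definition dehom2 :: "bpoly \<Rightarrow> complex poly" where
  "dehom2 P = poly P 1"

text \<open>P(1,t) as a univariate polynomial in t.\<close>
definition dehom1 :: "bpoly \<Rightarrow> complex poly" where
  "dehom1 P = map_poly (\<lambda>q. poly q 1) P"

definition FF :: "bpoly \<Rightarrow> bpoly \<Rightarrow> bpoly \<times> bpoly" where
  "FF z w = ((T1 * w^2 - T2 * z^2)^2, 4 * T2 * z * w * (w - z) * (T1 * w - T2 * z))"

definition F1 :: "bpoly \<Rightarrow> bpoly \<Rightarrow> bpoly \<times> bpoly" where
  "F1 c1 c2 = (let (x, y) = FF c1 c2; g = gcd x y in (x div g, y div g))"

text \<open>Fiter c1 c2 k = F_{k+1}.\<close>
fun Fiter :: "bpoly \<Rightarrow> bpoly \<Rightarrow> nat \<Rightarrow> bpoly \<times> bpoly" where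
  "Fiter c1 c2 0 = F1 c1 c2"
| "Fiter c1 c2 (Suc k) =
     (let (p, q) = Fiter c1 c2 k; (x, y) = FF p q in (x div T2^2, y div T2^2))"

end

theory Submission
  imports Defs "HOL-Analysis.Extended_Real_Limits"
begin

text \<open>
Since $Q_1(1,0) = 0$ (the $t_2$-adic valuation of the second coordinate of $F(C)$ exceeds that of
the first, so it survives division by the gcd), every $Q_n$ is divisible by $t_2$, and then
$F(P_n, t_2 q)$ is divisible by $t_2^2$ in closed form. Reading off the lowest coefficients of
$F_{n+1}(1,t)$ gives $A_{n+1} = A_n^4$ and $B_{n+1} = 4 A_n^2 B_n (A_n - B_n)$. The first
recurrence gives $A_n$ outright; for the second, $8|B_n| \le |A_n| K^{2^{n-1}}$ is preserved
for a suitable constant $K$, and $K^{2^{n-1}/4^{n-1}} \to 1$.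
\<close>

lemma power_recurrence_closed_form:
  fixes f :: "nat \<Rightarrow> 'a::monoid_mult"
  assumes "\<And>k. f (Suc k) = f k ^ m"
  shows "f k = f 0 ^ m ^ k"
  by (induction k) (simp_all add: assms power_mult[symmetric] mult.commute)

lemma poly_div_gcd_eq_0_if_power_dvd:
  fixes X Y :: "'a::{factorial_ring_gcd,semiring_gcd_mult_normalize} poly"
  assumes "X \<noteq> 0" and "[:-a, 1:] ^ m dvd Y" and "\<not> [:-a, 1:] ^ m dvd X"
  shows "poly (Y div gcd X Y) a = 0"
proof (cases "Y = 0")
  case False
  define g where "g = gcd X Y"
  have "Y = Y div g * g" by (simp add: g_def)
  then have "order a Y = order a (Y div g) + order a g"
    using False by (metis order_mult)
  moreover have "order a g \<le> order a X"
    using \<open>X \<noteq> 0\<close> dvd_trans[OF order_1 gcd_dvd1, of a X Y] by (simp add: g_def order_divides)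
  moreover have "order a X < m" "m \<le> order a Y"
    using assms False by (auto simp: order_divides)
  ultimately show ?thesis by (simp add: order_root g_def)
qed simp

text \<open>As $\alpha$ is raised to the fourth power at each step, the ratio $\beta / \alpha$ at most
squares (up to the factor 8) along the recurrence.\<close>

lemma quartic_recurrence_bound:
  fixes \<alpha> \<beta> :: "nat \<Rightarrow> real" and K :: real
  assumes \<alpha>: "\<And>k. \<alpha> (Suc k) = \<alpha> k ^ 4" and "0 \<le> \<alpha> 0"
    and \<beta>: "\<And>k. 0 \<le> \<beta> k" "\<And>k. \<beta> (Suc k) \<le> 4 * \<alpha> k ^ 2 * \<beta> k * (\<alpha> k + \<beta> k)"
    and "8 \<le> K" and "8 * \<beta> 0 \<le> \<alpha> 0 * K"
  shows "8 * \<beta> k \<le> \<alpha> k * K ^ (2 ^ k)"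
proof (induction k)
  case 0
  then show ?case using assms by simp
next
  case (Suc k)
  define X where "X = K ^ (2 ^ k)"
  have "K \<le> X" unfolding X_def using \<open>8 \<le> K\<close> by (intro self_le_power) auto
  have "0 \<le> \<alpha> k" using \<alpha> \<open>0 \<le> \<alpha> 0\<close> by (cases k) simp_all
  have "\<beta> k \<le> \<alpha> k * X / 8" using Suc.IH by (simp add: X_def)
  moreover have "\<alpha> k * 8 \<le> \<alpha> k * X"
    using \<open>K \<le> X\<close> \<open>8 \<le> K\<close> \<open>0 \<le> \<alpha> k\<close> by (intro mult_left_mono) auto
  with \<open>\<beta> k \<le> \<alpha> k * X / 8\<close> have "\<alpha> k + \<beta> k \<le> \<alpha> k * X / 4" by simp
  ultimately have "32 * \<alpha> k ^ 2 * \<beta> k * (\<alpha> k + \<beta> k)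
      \<le> 32 * \<alpha> k ^ 2 * (\<alpha> k * X / 8) * (\<alpha> k * X / 4)"
    using \<beta>(1)[of k] \<open>0 \<le> \<alpha> k\<close> \<open>K \<le> X\<close> \<open>8 \<le> K\<close>
    by (intro mult_mono mult_left_mono) auto
  also have "\<dots> = \<alpha> (Suc k) * K ^ (2 ^ Suc k)"
    by (simp add: \<alpha> X_def power_mult power2_eq_square power4_eq_xxxx power_mult_distrib)
  finally show ?case using \<beta>(2)[of k] by simp
qed

lemma quartic_recurrence_root_bound:
  fixes \<alpha> \<beta> :: "nat \<Rightarrow> real"
  assumes \<alpha>: "\<And>k. \<alpha> (Suc k) = \<alpha> k ^ 4" and "0 < \<alpha> 0"
    and \<beta>: "\<And>k. 0 \<le> \<beta> k" "\<And>k. \<beta> (Suc k) \<le> 4 * \<alpha> k ^ 2 * \<beta> k * (\<alpha> k + \<beta> k)"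
  obtains K where "8 \<le> K" and "\<And>k. \<beta> k powr (1 / 4 ^ k) \<le> \<alpha> 0 * K powr ((1 / 2) ^ k)"
proof -
  define K where "K = 8 + 8 * \<beta> 0 / \<alpha> 0"
  have "\<alpha> 0 * K = 8 * \<alpha> 0 + 8 * \<beta> 0"
    using \<open>0 < \<alpha> 0\<close> by (simp add: K_def algebra_simps)
  then have "8 \<le> K" "8 * \<beta> 0 \<le> \<alpha> 0 * K"
    using \<open>0 < \<alpha> 0\<close> \<beta>(1)[of 0] by (simp_all add: K_def)
  note bound = quartic_recurrence_bound[OF \<alpha> less_imp_le[OF \<open>0 < \<alpha> 0\<close>] \<beta> this]
  have "\<beta> k powr (1 / 4 ^ k) \<le> \<alpha> 0 * K powr ((1 / 2) ^ k)" for k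
  proof -
    have "\<beta> k \<le> \<alpha> 0 ^ 4 ^ k * K ^ 2 ^ k"
      using bound[of k] \<beta>(1)[of k] unfolding power_recurrence_closed_form[of \<alpha> 4 k, OF \<alpha>]
      by linarith
    also have "\<dots> = \<alpha> 0 powr 4 ^ k * K powr 2 ^ k"
      using \<open>0 < \<alpha> 0\<close> \<open>8 \<le> K\<close> by (simp add: powr_realpow[symmetric])
    finally have "\<beta> k powr (1 / 4 ^ k) \<le> (\<alpha> 0 powr 4 ^ k * K powr 2 ^ k) powr (1 / 4 ^ k)"
      using \<beta>(1)[of k] by (intro powr_mono2) simp_all
    also have "\<dots> = \<alpha> 0 powr (4 ^ k / 4 ^ k) * K powr (2 ^ k / 4 ^ k)"
      by (simp add: powr_mult powr_powr)
    also have "(2::real) ^ k / 4 ^ k = (1 / 2) ^ k"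
      by (simp add: power_divide[symmetric])
    finally show ?thesis using \<open>0 < \<alpha> 0\<close> by simp
  qed
  with \<open>8 \<le> K\<close> show ?thesis by (rule that)
qed

lemma limsup_root_quartic_recurrence:
  fixes \<alpha> \<beta> :: "nat \<Rightarrow> real"
  assumes \<alpha>: "\<And>k. \<alpha> (Suc k) = \<alpha> k ^ 4" and "0 \<le> \<alpha> 0"
    and \<beta>: "\<And>k. 0 \<le> \<beta> k" "\<And>k. \<beta> (Suc k) \<le> 4 * \<alpha> k ^ 2 * \<beta> k * (\<alpha> k + \<beta> k)"
  shows "limsup (\<lambda>k. ereal (\<beta> k powr (1 / 4 ^ k))) \<le> ereal (\<alpha> 0)"
proof (cases "\<alpha> 0 = 0")
  case True
  have "\<alpha> k = 0" for k
    by (induction k) (simp_all add: \<alpha> True)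
  then have \<beta>_Suc: "\<beta> (Suc k) = 0" for k
    using \<beta>(1)[of "Suc k"] \<beta>(2)[of k] by simp
  have "\<forall>\<^sub>F k in sequentially. ereal (\<beta> k powr (1 / 4 ^ k)) \<le> ereal (\<alpha> 0)"
  proof (rule eventually_sequentiallyI[of 1])
    fix k :: nat
    assume "1 \<le> k"
    then obtain j where "k = Suc j" by (cases k) auto
    then show "ereal (\<beta> k powr (1 / 4 ^ k)) \<le> ereal (\<alpha> 0)"
      using \<beta>_Suc \<open>0 \<le> \<alpha> 0\<close> by simp
  qed
  then show ?thesis by (rule Limsup_bounded)
next
  case False
  with \<open>0 \<le> \<alpha> 0\<close> have "0 < \<alpha> 0" by simp
  then obtain K where "8 \<le> K"
    and root: "\<And>k. \<beta> k powr (1 / 4 ^ k) \<le> \<alpha> 0 * K powr ((1 / 2) ^ k)"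
    using quartic_recurrence_root_bound[OF \<alpha> \<open>0 < \<alpha> 0\<close> \<beta>] by blast
  have "(\<lambda>k. \<alpha> 0 * K powr ((1 / 2) ^ k)) \<longlonglongrightarrow> \<alpha> 0 * K powr 0"
    using \<open>8 \<le> K\<close> by (intro tendsto_intros LIMSEQ_realpow_zero) auto
  then have "(\<lambda>k. ereal (\<alpha> 0 * K powr ((1 / 2) ^ k))) \<longlonglongrightarrow> ereal (\<alpha> 0)"
    using \<open>8 \<le> K\<close> by (intro tendsto_ereal) simp
  then have "limsup (\<lambda>k. ereal (\<alpha> 0 * K powr ((1 / 2) ^ k))) = ereal (\<alpha> 0)"
    by (intro lim_imp_Limsup) simp
  moreover have "limsup (\<lambda>k. ereal (\<beta> k powr (1 / 4 ^ k)))
      \<le> limsup (\<lambda>k. ereal (\<alpha> 0 * K powr ((1 / 2) ^ k)))"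
    using root by (intro Limsup_mono always_eventually) simp
  ultimately show ?thesis by simp
qed

lemma dehom1_0 [simp]: "dehom1 0 = 0"
  by (simp add: dehom1_def)

lemma dehom1_add: "dehom1 (p + q) = dehom1 p + dehom1 q"
  by (rule poly_eqI) (simp add: dehom1_def coeff_map_poly)

lemma dehom1_diff: "dehom1 (p - q) = dehom1 p - dehom1 q"
  by (rule poly_eqI) (simp add: dehom1_def coeff_map_poly)

lemma dehom1_pCons: "dehom1 (pCons a p) = pCons (poly a 1) (dehom1 p)"
  by (simp add: dehom1_def map_poly_pCons)

lemma dehom1_smult: "dehom1 (smult a p) = smult (poly a 1) (dehom1 p)"
  by (simp add: dehom1_def map_poly_smult)

lemma dehom1_mult: "dehom1 (p * q) = dehom1 p * dehom1 q"
  by (induction p) (simp_all add: dehom1_pCons dehom1_smult dehom1_add)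

lemma dehom1_power: "dehom1 (p ^ n) = dehom1 p ^ n"
  by (induction n) (simp_all add: dehom1_mult, simp add: dehom1_def)

lemma dehom1_numeral: "dehom1 (numeral n) = numeral n"
  by (simp add: numeral_poly dehom1_pCons)

lemma dehom1_T1: "dehom1 T1 = 1"
  by (simp add: T1_def dehom1_pCons)

lemma dehom1_T2: "dehom1 T2 = [:0, 1:]"
  by (simp add: T2_def dehom1_pCons)

lemmas dehom1_simps =
  dehom1_add dehom1_diff dehom1_mult dehom1_power dehom1_numeral dehom1_T1 dehom1_T2

lemma coeff_0_dehom1: "coeff (dehom1 p) 0 = ev2 p 1 0"
  by (simp add: dehom1_def ev2_def coeff_map_poly poly_0_coeff_0)

lemma T2_dvd_iff: "T2 dvd p \<longleftrightarrow> poly p 0 = 0"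
  using dvd_iff_poly_eq_0[of 0 p] by (simp add: T2_def)

lemma T2_not_unit: "\<not> is_unit T2"
  by (simp add: T2_def is_unit_poly_iff)

lemma T2_nonzero [simp]: "T2 \<noteq> 0"
  by (simp add: T2_def)

lemma T1_nonzero [simp]: "T1 \<noteq> 0"
  by (simp add: T1_def)

lemma FF_T2_mult:
  "FF p (T2 * q) =
    (T2\<^sup>2 * (T1 * T2 * q\<^sup>2 - p\<^sup>2)\<^sup>2, T2\<^sup>2 * (T2 * (4 * p * q * (T2 * q - p) * (T1 * q - p))))"
  by (simp add: FF_def algebra_simps power2_eq_square power3_eq_cube)

lemma fst_FF_nonzero:
  assumes "c2 \<noteq> 0"
  shows "fst (FF c1 c2) \<noteq> 0"
proof
  assume "fst (FF c1 c2) = 0"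
  then have eq: "T1 * c2\<^sup>2 = T2 * c1\<^sup>2" by (simp add: FF_def)
  then have "c1 \<noteq> 0" using assms by auto
  have "degree (T1 * c2\<^sup>2) = 2 * degree c2"
    using assms by (simp add: degree_mult_eq degree_power_eq T1_def)
  moreover have "degree (T2 * c1\<^sup>2) = 2 * degree c1 + 1"
    using \<open>c1 \<noteq> 0\<close> by (simp add: degree_mult_eq degree_power_eq T2_def)
  moreover have "degree (T1 * c2\<^sup>2) = degree (T2 * c1\<^sup>2)" using eq by simp
  ultimately show False by presburger
qed

lemma snd_F1_root:
  assumes "coprime c1 c2" and "c2 \<noteq> 0"
  shows "poly (snd (F1 c1 c2)) 0 = 0"
proof -
  define X Y where "X = fst (FF c1 c2)" and "Y = snd (FF c1 c2)"
  have "\<exists>m. T2 ^ m dvd Y \<and> \<not> T2 ^ m dvd X"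
  proof (cases "T2 dvd c2")
    case False
    then have "\<not> T2 dvd X"
      unfolding T2_dvd_iff by (simp add: X_def FF_def T1_def T2_def)
    moreover have "T2 dvd Y" by (simp add: Y_def FF_def)
    ultimately show ?thesis by (metis power_one_right)
  next
    case True
    then obtain q where c2: "c2 = T2 * q" by blast
    have "\<not> T2 dvd c1"
      using assms(1) True T2_not_unit coprime_common_divisor by blast
    then have "\<not> T2 dvd (T1 * T2 * q\<^sup>2 - c1\<^sup>2)\<^sup>2"
      unfolding T2_dvd_iff by (simp add: T2_def)
    then have "\<not> T2\<^sup>2 * T2 dvd X"
      by (simp add: X_def c2 FF_T2_mult)
    moreover have "T2\<^sup>2 * T2 dvd Y" by (simp add: Y_def c2 FF_T2_mult)
    ultimately show ?thesis by (metis power_Suc2 numeral_2_eq_2 numeral_3_eq_3)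
  qed
  then obtain m where "T2 ^ m dvd Y" "\<not> T2 ^ m dvd X" by blast
  then have "poly (Y div gcd X Y) 0 = 0"
    using fst_FF_nonzero[OF assms(2)] poly_div_gcd_eq_0_if_power_dvd[of X 0 m Y]
    by (simp add: X_def T2_def)
  then show ?thesis unfolding X_def Y_def by (simp add: F1_def Let_def case_prod_unfold)
qed

lemma Fiter_Suc_if_T2_dvd:
  assumes "Fiter c1 c2 k = (p, T2 * q)"
  shows "Fiter c1 c2 (Suc k) =
    ((T1 * T2 * q\<^sup>2 - p\<^sup>2)\<^sup>2, T2 * (4 * p * q * (T2 * q - p) * (T1 * q - p)))"
  by (simp add: assms FF_T2_mult)

lemma snd_Fiter_root:
  assumes "coprime c1 c2" and "c2 \<noteq> 0"
  shows "poly (snd (Fiter c1 c2 k)) 0 = 0"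
proof (induction k)
  case 0
  then show ?case using snd_F1_root[OF assms] by simp
next
  case (Suc k)
  then obtain q where "Fiter c1 c2 k = (fst (Fiter c1 c2 k), T2 * q)"
    by (metis T2_dvd_iff dvdE prod.collapse)
  then show ?case by (subst Fiter_Suc_if_T2_dvd) (simp_all add: T2_def)
qed

lemma Fiter_coeff_recurrence:
  assumes "poly (snd (Fiter c1 c2 k)) 0 = 0"
  defines "a \<equiv> \<lambda>k. coeff (dehom1 (fst (Fiter c1 c2 k))) 0"
    and "b \<equiv> \<lambda>k. coeff (dehom1 (snd (Fiter c1 c2 k))) 1"
  shows "a (Suc k) = a k ^ 4" and "b (Suc k) = 4 * a k ^ 2 * b k * (a k - b k)"
proof -
  obtain q where q: "snd (Fiter c1 c2 k) = T2 * q" using assms T2_dvd_iff by blast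
  then have Fiter: "Fiter c1 c2 k = (fst (Fiter c1 c2 k), T2 * q)" by (metis prod.collapse)
  define u w where "u = dehom1 (fst (Fiter c1 c2 k))" and "w = dehom1 q"
  have "a k = poly u 0" "b k = poly w 0"
    using q by (simp_all add: a_def b_def u_def w_def dehom1_simps poly_0_coeff_0)
  moreover have "a (Suc k) = poly (([:0, 1:] * w\<^sup>2 - u\<^sup>2)\<^sup>2) 0"
    by (subst a_def, subst Fiter_Suc_if_T2_dvd[OF Fiter])
      (simp add: dehom1_simps u_def w_def poly_0_coeff_0)
  moreover have "b (Suc k) = poly (4 * u * w * ([:0, 1:] * w - u) * (w - u)) 0"
    by (subst b_def, subst Fiter_Suc_if_T2_dvd[OF Fiter])
      (simp add: dehom1_simps u_def w_def poly_0_coeff_0)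
  ultimately show "a (Suc k) = a k ^ 4" and "b (Suc k) = 4 * a k ^ 2 * b k * (a k - b k)"
    by (simp_all add: algebra_simps power2_eq_square power4_eq_xxxx)
qed

theorem lemma4p2:
  fixes c1 c2 :: bpoly and d :: nat
  assumes "homogeneous c1 d" and "homogeneous c2 d"
    and "coprime c1 c2" and "c2 \<noteq> 0"
    and "Fract (dehom2 c1) (dehom2 c2) \<notin> {0, 1, Fract [:0, 1:] 1}"
  defines "P1 \<equiv> fst (F1 c1 c2)"
    and "A \<equiv> (\<lambda>n. coeff (dehom1 (fst (Fiter c1 c2 (n - 1)))) 0)"
    and "B \<equiv> (\<lambda>n. coeff (dehom1 (snd (Fiter c1 c2 (n - 1)))) 1)"
  shows "(\<forall>n\<ge>1. A n = ev2 P1 1 0 ^ (4 ^ (n - 1)))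
    \<and> limsup (\<lambda>n. ereal (norm (B n) powr (1 / 4 ^ (n - 1)))) \<le> ereal (norm (ev2 P1 1 0))"
proof -
  define a where "a k = coeff (dehom1 (fst (Fiter c1 c2 k))) 0" for k
  define b where "b k = coeff (dehom1 (snd (Fiter c1 c2 k))) 1" for k
  note root = snd_Fiter_root[OF assms(3,4)]
  have a: "a (Suc k) = a k ^ 4" and b: "b (Suc k) = 4 * a k ^ 2 * b k * (a k - b k)" for k
    unfolding a_def b_def by (rule Fiter_coeff_recurrence[OF root])+
  have a0: "a 0 = ev2 P1 1 0"
    by (simp add: a_def P1_def coeff_0_dehom1)
  have "norm (b (Suc k)) \<le> 4 * norm (a k) ^ 2 * norm (b k) * (norm (a k) + norm (b k))" for k
    unfolding b by (simp add: norm_mult norm_power mult_left_mono norm_triangle_ineq4)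
  then have "limsup (\<lambda>k. ereal (norm (b k) powr (1 / 4 ^ k))) \<le> ereal (norm (a 0))"
    by (intro limsup_root_quartic_recurrence) (simp_all add: a norm_power)
  moreover have "limsup (\<lambda>n. ereal (norm (B n) powr (1 / 4 ^ (n - 1))))
      = limsup (\<lambda>k. ereal (norm (b k) powr (1 / 4 ^ k)))"
    using limsup_shift[of "\<lambda>n. ereal (norm (B n) powr (1 / 4 ^ (n - 1)))"]
    by (simp add: B_def b_def)
  moreover have "A n = a 0 ^ 4 ^ (n - 1)" for n
    using power_recurrence_closed_form[of a, OF a] by (simp add: A_def a_def)
  ultimately show ?thesis by (simp add: a0)
qed

end
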